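(* Let $k\geq2$ be an integer, let $\mathcal{S}\subseteq\mathbb{A}$ be a ring (where $\mathbb{A}$ is the set of real algebraic numbers), let $F_0,\dots,F_{k-1}$ be square matrices over $\mathcal{S}$ all of the same dimension with $F_0$ the zero matrix, and set $F(n)=F_{n_0}\cdots F_{n_{s-1}}$ for $(n)_k=n_{s-1}\cdots n_0$. Then for every real $\rho'>0$, the joint spectral radius $\rho$ of $\{F_1,\dots,F_{k-1}\}$ satisfies $\rho\leq\rho'$ iff for every $\varepsilon>0$ we have $F(n)\in O\bigl(n^{\log_k\rho'+\varepsilon}\bigr)$ as $n\to\infty$.
   Context: For $n\in\mathbb{N}_0$, $(n)_k=n_{s-1}\cdots n_0$ is the standard base-$k$ representation of $n$ (no leading zeros; $(0)_k$ empty). The joint spectral radius of a finite set $S$ of square matrices is $\rho(S)=\lim_{\ell\to\infty}\max\{\|A_1\cdots A_\ell\|^{1/\ell}: A_i\in S\}$ for any matrix norm. A matrix sequence $(F(n))$ is in $O(g(n))$ if there are $n_0$, $c>0$ with $\|F(n)\|\leq c\,g(n)$ for $n\geq n_0$ (equivalently, each entry sequence is in $O(g(n))$). *)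

theory Defs
  imports "HOL-Analysis.Analysis" "HOL-Library.Landau_Symbols"
    "HOL-Computational_Algebra.Polynomial"
begin

function digits :: "nat \<Rightarrow> nat \<Rightarrow> nat list" where
  "digits k n = (if n = 0 \<or> k < 2 then [] else n mod k # digits k (n div k))"
  by auto
termination
  by (relation "Wellfounded.measure snd") auto

definition mat_list_prod :: "(real^'n^'n) list \<Rightarrow> real^'n^'n" where
  "mat_list_prod As = foldr (\<lambda>A M. A ** M) As (mat 1)"

definition digit_mat_seq :: "nat \<Rightarrow> (nat \<Rightarrow> real^'n^'n) \<Rightarrow> nat \<Rightarrow> real^'n^'n" where
  "digit_mat_seq k Fs n = mat_list_prod (map Fs (digits k n))"

text \<open>Joint spectral radius of a finite set of square matrices, as the limit
  of max ||A_1 ... A_l||^(1/l) (with the Frobenius norm of real^'n^'n).\<close>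
definition jsr :: "(real^'n^'n) set \<Rightarrow> real" where
  "jsr T = lim (\<lambda>l. Max {norm (mat_list_prod As) powr (1 / real l) | As.
                          set As \<subseteq> T \<and> length As = l})"

definition real_subring :: "real set \<Rightarrow> bool" where
  "real_subring S \<longleftrightarrow> 0 \<in> S \<and> 1 \<in> S \<and> (\<forall>x\<in>S. \<forall>y\<in>S. x + y \<in> S \<and> x - y \<in> S \<and> x * y \<in> S)"

end

theory Submission
  imports Defs "HOL-Library.Log_Nat"
begin

(* Let M(l) be the largest norm of a product of l matrices from T = {F_1, ..., F_(k-1)}.
  M is submultiplicative, so by Fekete's argument M(l)^(1/l) converges to its infimum; hence
  jsr T <= rho iff M(l) = O(d^l) for every d > rho.
  Since F_0 = 0, F(n) vanishes unless every digit of n is nonzero, and the numbers with l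
  nonzero digits realise exactly the products of l matrices from T. So ||F(n)|| <= M(l) for an
  l-digit n, with equality for a suitable one, and k^(l-1) <= n < k^l makes d^l comparable to
  n^(log_k d). Thus M(l) = O(d^l) iff ||F(n)|| = O(n^(log_k d)), and d = rho' k^eps gives the
  claim. *)

lemma digits_0 [simp]: "digits k 0 = []"
  by simp

lemma digits_pos: "k \<ge> 2 \<Longrightarrow> n > 0 \<Longrightarrow> digits k n = n mod k # digits k (n div k)"
  by simp

declare digits.simps [simp del]

lemma length_digits: "k \<ge> 2 \<Longrightarrow> length (digits k n) = floorlog k n"
proof (induction k n rule: digits.induct)
  case (1 k n)
  then show ?case
    by (cases "n = 0") (simp_all add: digits_pos compute_floorlog[of k n] floorlog_eq_zero_iff)
qed

lemma digits_less: "k \<ge> 2 \<Longrightarrow> d \<in> set (digits k n) \<Longrightarrow> d < k"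
proof (induction k n rule: digits.induct)
  case (1 k n)
  then show ?case
    by (cases "n = 0") (auto simp: digits_pos)
qed

definition from_digits :: "nat \<Rightarrow> nat list \<Rightarrow> nat" where
  "from_digits k ds = foldr (\<lambda>d acc. d + k * acc) ds 0"

lemma digits_from_digits:
  assumes "k \<ge> 2" "set ds \<subseteq> {..<k}" "ds \<noteq> [] \<Longrightarrow> last ds \<noteq> 0"
  shows "digits k (from_digits k ds) = ds"
  using assms(2,3)
proof (induction ds)
  case Nil
  then show ?case by (simp add: from_digits_def)
next
  case (Cons d ds)
  have IH: "digits k (from_digits k ds) = ds"
    using Cons by (cases ds) auto
  have d: "d < k" using Cons.prems by simp
  have n: "from_digits k (d # ds) = d + k * from_digits k ds"
    by (simp add: from_digits_def)
  have pos: "from_digits k (d # ds) > 0"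
  proof (cases "ds = []")
    case True
    then show ?thesis using Cons.prems by (simp add: from_digits_def)
  next
    case False
    then have "from_digits k ds \<noteq> 0" using IH by (metis digits_0)
    then show ?thesis using n assms(1) by simp
  qed
  show ?case
    using digits_pos[OF assms(1) pos] IH d by (simp add: n)
qed

lemma floorlog_le_self: "b \<ge> 2 \<Longrightarrow> floorlog b x \<le> x"
  by (intro floorlog_leI) (auto intro: less_le_trans[OF less_exp power_mono])

lemma filterlim_floorlog_at_top: "b \<ge> 2 \<Longrightarrow> filterlim (floorlog b) at_top at_top"
  unfolding filterlim_at_top
proof (intro allI eventually_at_top_linorderI)
  fix z x assume "b \<ge> 2" "b ^ z \<le> x"
  then have "floorlog b (1 * b ^ z) \<le> floorlog b x"
    by (simp add: floorlog_mono)
  then show "z \<le> floorlog b x"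
    using \<open>b \<ge> 2\<close> by (simp add: floorlog_def)
qed

lemma log_floorlog_bounds:
  assumes "x > 0" "b > 1"
  shows "real (floorlog b x) - 1 \<le> log b x" "log b x < real (floorlog b x)"
proof -
  have "log b x \<ge> 0" using assms by simp
  then show "real (floorlog b x) - 1 \<le> log b x" "log b x < real (floorlog b x)"
    using assms by (simp_all add: floorlog_def add.commute[of 1])
qed

lemma powr_le_max_inverse:
  fixes d u :: real
  assumes "d > 0" "\<bar>u\<bar> \<le> 1"
  shows "d powr u \<le> max d (inverse d)"
proof (cases "d \<ge> 1")
  case True
  then have "d powr u \<le> d powr 1" using assms by (intro powr_mono) auto
  then show ?thesis using assms by simp
next
  case False
  then have "d powr u \<le> d powr -1" using assms by (intro powr_mono') auto
  then show ?thesis using assms by (simp add: powr_minus)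
qed

lemma powr_log_swap:
  fixes b x y :: real
  assumes "x > 0" "y > 0"
  shows "x powr log b y = y powr log b x"
  using assms unfolding powr_def log_def by simp

lemma root_le_of_le_mult_pow:
  fixes x K d :: real
  assumes "0 \<le> x" "K > 0" "d > 0" "l \<ge> 1" "x \<le> K * d ^ l"
  shows "x powr (1 / real l) \<le> K powr (1 / real l) * d"
proof -
  have "x powr (1 / real l) \<le> (K * d ^ l) powr (1 / real l)"
    using assms by (intro powr_mono2) auto
  also have "\<dots> = K powr (1 / real l) * d"
    using assms by (simp add: powr_mult powr_realpow[symmetric] powr_powr)
  finally show ?thesis .
qed

lemma powr_one_over_power:
  fixes x :: real
  assumes "0 \<le> x" "n \<ge> 1"
  shows "(x powr (1 / real n)) ^ n = x"
  using assms by (cases "x = 0") (auto simp: powr_realpow[symmetric] powr_powr)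

lemma all_gt_log_iff:
  fixes b x :: real
  assumes "b > 1" "x > 0"
  shows "(\<forall>d>x. P (log b d)) \<longleftrightarrow> (\<forall>\<epsilon>>0. P (log b x + \<epsilon>))"
proof
  assume P: "\<forall>d>x. P (log b d)"
  show "\<forall>\<epsilon>>0. P (log b x + \<epsilon>)"
  proof (intro allI impI)
    fix \<epsilon> :: real assume "\<epsilon> > 0"
    have "x < b powr (log b x + \<epsilon>)"
      using \<open>\<epsilon> > 0\<close> assms by (simp add: powr_add)
    from P[rule_format, OF this] show "P (log b x + \<epsilon>)" using assms by simp
  qed
next
  assume P: "\<forall>\<epsilon>>0. P (log b x + \<epsilon>)"
  show "\<forall>d>x. P (log b d)"
  proof (intro allI impI)
    fix d assume "x < d"
    then have "log b d - log b x > 0" using assms by simp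
    then show "P (log b d)" using P[rule_format, of "log b d - log b x"] by simp
  qed
qed

context
  fixes a :: "nat \<Rightarrow> real"
  assumes submult: "\<And>m n. a (m + n) \<le> a m * a n"
    and nonneg: "\<And>n. 0 \<le> a n"
begin

lemma submult_le_const_mult_pow:
  assumes "d > 0" "m \<ge> 1" "a m \<le> d ^ m"
  shows "\<exists>K>0. \<forall>l. a l \<le> K * d ^ l"
proof -
  define K where "K = 1 + (\<Sum>r<m. a r / d ^ r)"
  have "K > 0" unfolding K_def using assms(1)
    by (intro add_pos_nonneg sum_nonneg divide_nonneg_pos) (auto simp: nonneg)
  moreover have "a l \<le> K * d ^ l" for l
  proof (induction l rule: less_induct)
    case (less l)
    show ?case
    proof (cases "l < m")
      case True
      have "a l / d ^ l \<le> (\<Sum>r<m. a r / d ^ r)"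
        using True assms(1) by (intro member_le_sum) (auto simp: nonneg)
      then have "a l / d ^ l \<le> K" unfolding K_def by simp
      then show ?thesis using assms(1) by (simp add: divide_le_eq mult.commute)
    next
      case False
      then have l: "l = m + (l - m)" "l - m < l" using assms(2) by auto
      have "a l \<le> a m * a (l - m)" using submult[of m "l - m"] l(1) by simp
      also have "\<dots> \<le> d ^ m * (K * d ^ (l - m))"
        using less.IH[OF l(2)] assms by (intro mult_mono) (auto simp: nonneg)
      also have "\<dots> = K * d ^ l" by (subst (2) l(1)) (simp add: power_add)
      finally show ?thesis .
    qed
  qed
  ultimately show ?thesis by blast
qed

lemma submult_root_tendsto_INF:
  "(\<lambda>l. a l powr (1 / real l)) \<longlonglongrightarrow> (INF l\<in>{1..}. a l powr (1 / real l))"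
  (is "?root \<longlonglongrightarrow> ?L")
proof (rule order_tendstoI)
  have bdd: "bdd_below (?root ` {1..})"
    by (rule bdd_belowI[of _ 0]) auto
  fix y assume "y < ?L"
  show "\<forall>\<^sub>F l in sequentially. y < ?root l"
    using eventually_ge_at_top[of 1]
    by eventually_elim (use \<open>y < ?L\<close> cInf_lower[OF _ bdd] in force)
next
  fix y assume "?L < y"
  then obtain z where z: "?L < z" "z < y" using dense by blast
  then obtain m where m: "m \<ge> 1" "?root m < z"
    by (subst (asm) cInf_less_iff) (auto intro: bdd_belowI[of _ 0])
  have "z > 0" using m(2) powr_ge_zero[of "a m" "1 / real m"] by linarith
  have "a m = ?root m ^ m"
    using m(1) nonneg[of m] by (simp add: powr_one_over_power)
  also have "\<dots> \<le> z ^ m" using m(2) by (intro power_mono) auto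
  finally obtain K where K: "K > 0" "\<forall>l. a l \<le> K * z ^ l"
    using submult_le_const_mult_pow[OF \<open>z > 0\<close> m(1)] by blast
  have "(\<lambda>l. K powr (1 / real l) * z) \<longlonglongrightarrow> K powr 0 * z"
    using K(1) by (intro tendsto_intros lim_1_over_n) auto
  then have "\<forall>\<^sub>F l in sequentially. K powr (1 / real l) * z < y"
    using K(1) z(2) by (intro order_tendstoD) auto
  then show "\<forall>\<^sub>F l in sequentially. ?root l < y"
    using eventually_ge_at_top[of 1]
    by eventually_elim (use root_le_of_le_mult_pow[OF nonneg K(1) \<open>z > 0\<close>] K(2) in force)
qed

lemma submult_INF_root_le_iff_bigo:
  assumes "0 \<le> \<rho>"
  shows "(INF l\<in>{1..}. a l powr (1 / real l)) \<le> \<rho> \<longleftrightarrow> (\<forall>d>\<rho>. a \<in> O(\<lambda>l. d ^ l))"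
  (is "?L \<le> \<rho> \<longleftrightarrow> _")
proof
  assume "?L \<le> \<rho>"
  show "\<forall>d>\<rho>. a \<in> O(\<lambda>l. d ^ l)"
  proof (intro allI impI)
    fix d assume "\<rho> < d"
    with \<open>?L \<le> \<rho>\<close> have "?L < d" by simp
    then obtain m where m: "m \<ge> 1" "a m powr (1 / real m) < d"
      by (subst (asm) cInf_less_iff) (auto intro: bdd_belowI[of _ 0])
    have "a m = (a m powr (1 / real m)) ^ m"
      using m(1) nonneg[of m] by (simp add: powr_one_over_power)
    also have "\<dots> \<le> d ^ m" using m(2) by (intro power_mono) auto
    finally obtain K where "\<forall>l. a l \<le> K * d ^ l"
      using submult_le_const_mult_pow[of d m] assms \<open>\<rho> < d\<close> m(1) by auto
    then show "a \<in> O(\<lambda>l. d ^ l)"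
      using assms \<open>\<rho> < d\<close> nonneg by (intro bigoI[of _ K]) auto
  qed
next
  assume O: "\<forall>d>\<rho>. a \<in> O(\<lambda>l. d ^ l)"
  show "?L \<le> \<rho>"
  proof (rule dense_ge)
    fix d assume "\<rho> < d"
    then have "d > 0" using assms by simp
    have "a \<in> O(\<lambda>l. d ^ l)" using O \<open>\<rho> < d\<close> by blast
    then obtain c where c: "c > 0" "\<forall>\<^sub>F l in sequentially. norm (a l) \<le> c * norm (d ^ l)"
      by (rule landau_o.bigE)
    have "\<forall>\<^sub>F l in sequentially. a l powr (1 / real l) \<le> c powr (1 / real l) * d"
      using c(2) eventually_ge_at_top[of 1]
    proof eventually_elim
      case (elim l)
      then have "a l \<le> c * d ^ l" using nonneg[of l] \<open>d > 0\<close> by simp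
      with elim show ?case by (intro root_le_of_le_mult_pow nonneg c(1) \<open>d > 0\<close>)
    qed
    moreover have "(\<lambda>l. c powr (1 / real l) * d) \<longlonglongrightarrow> c powr 0 * d"
      using c(1) by (intro tendsto_intros lim_1_over_n) auto
    ultimately show "?L \<le> d"
      using tendsto_le[OF _ _ submult_root_tendsto_INF] c(1) by auto
  qed
qed

end

lemma norm_matrix_mult_le: "norm (A ** B) \<le> norm A * norm B"
  for A B :: "real^'n^'n"
proof -
  have row: "norm ((A ** B) $ i) \<le> norm (A $ i) * norm B" for i
  proof -
    have "(A ** B) $ i = (\<Sum>l\<in>UNIV. (A $ i $ l) *\<^sub>R (B $ l))"
      by (simp add: vec_eq_iff matrix_matrix_mult_def sum_component)
    then have "norm ((A ** B) $ i) \<le> (\<Sum>l\<in>UNIV. norm ((A $ i $ l) *\<^sub>R (B $ l)))"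
      by (simp only: norm_sum)
    also have "\<dots> = (\<Sum>l\<in>UNIV. \<bar>A $ i $ l\<bar> * \<bar>norm (B $ l)\<bar>)"
      by simp
    also have "\<dots> \<le> L2_set (\<lambda>l. A $ i $ l) UNIV * L2_set (\<lambda>l. norm (B $ l)) UNIV"
      by (rule L2_set_mult_ineq)
    also have "\<dots> = norm (A $ i) * norm B"
      by (simp add: norm_vec_def L2_set_def)
    finally show ?thesis .
  qed
  have "norm (A ** B) = L2_set (\<lambda>i. norm ((A ** B) $ i)) UNIV" by (simp add: norm_vec_def)
  also have "\<dots> \<le> L2_set (\<lambda>i. norm B * norm (A $ i)) UNIV"
    by (rule L2_set_mono) (use row in \<open>auto simp: mult.commute\<close>)
  also have "\<dots> = norm B * norm A"
    by (simp add: L2_set_right_distrib[symmetric] norm_vec_def)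
  finally show ?thesis by (simp add: mult.commute)
qed

lemma mat_list_prod_append: "mat_list_prod (As @ Bs) = mat_list_prod As ** mat_list_prod Bs"
  by (induction As) (auto simp: mat_list_prod_def matrix_mul_assoc)

lemma mat_list_prod_eq_0: "0 \<in> set As \<Longrightarrow> mat_list_prod As = 0"
  by (induction As) (auto simp: mat_list_prod_def)

lemma mono_on_Max_commute:
  assumes "mono_on A f" "finite X" "X \<noteq> {}" "X \<subseteq> A"
  shows "Max (f ` X) = f (Max X)"
proof (rule Max_eqI)
  show "finite (f ` X)" using assms(2) by blast
  show "f (Max X) \<in> f ` X" using assms(2,3) by simp
  fix x assume "x \<in> f ` X"
  then obtain y where "y \<in> X" "x = f y" by blast
  moreover have "y \<le> Max X" using assms(2) \<open>y \<in> X\<close> by simp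
  ultimately show "x \<le> f (Max X)"
    using mono_onD[OF assms(1), of y "Max X"] assms(4) Max_in[OF assms(2,3)] by auto
qed

definition max_prod_norm :: "(real^'n^'n) set \<Rightarrow> nat \<Rightarrow> real" where
  "max_prod_norm T l =
     Max ((\<lambda>As. norm (mat_list_prod As)) ` {As. set As \<subseteq> T \<and> length As = l})"

context
  fixes T :: "(real^'n^'n) set"
  assumes finite_T: "finite T" and nonempty_T: "T \<noteq> {}"
begin

lemma products_of_length_finite_nonempty:
  "finite {As. set As \<subseteq> T \<and> length As = l}" "{As. set As \<subseteq> T \<and> length As = l} \<noteq> {}"
proof -
  show "finite {As. set As \<subseteq> T \<and> length As = l}"
    using finite_T by (rule finite_lists_length_eq)
  obtain t where "t \<in> T" using nonempty_T by blast
  then have "replicate l t \<in> {As. set As \<subseteq> T \<and> length As = l}" by auto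
  then show "{As. set As \<subseteq> T \<and> length As = l} \<noteq> {}" by blast
qed

lemma norm_mat_list_prod_le_max_prod_norm:
  "set As \<subseteq> T \<Longrightarrow> norm (mat_list_prod As) \<le> max_prod_norm T (length As)"
  unfolding max_prod_norm_def using products_of_length_finite_nonempty by (intro Max_ge) auto

lemma max_prod_norm_attained:
  "\<exists>As. set As \<subseteq> T \<and> length As = l \<and> max_prod_norm T l = norm (mat_list_prod As)"
proof -
  have "max_prod_norm T l \<in> (\<lambda>As. norm (mat_list_prod As)) ` {As. set As \<subseteq> T \<and> length As = l}"
    unfolding max_prod_norm_def using products_of_length_finite_nonempty by (intro Max_in) auto
  then show ?thesis by auto
qed

lemma max_prod_norm_nonneg: "0 \<le> max_prod_norm T l"
  using max_prod_norm_attained[of l] by (metis norm_ge_zero)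

lemma max_prod_norm_submult: "max_prod_norm T (m + n) \<le> max_prod_norm T m * max_prod_norm T n"
proof -
  obtain As where As: "set As \<subseteq> T" "length As = m + n"
    "max_prod_norm T (m + n) = norm (mat_list_prod As)"
    using max_prod_norm_attained by blast
  have "mat_list_prod As = mat_list_prod (take m As) ** mat_list_prod (drop m As)"
    by (metis append_take_drop_id mat_list_prod_append)
  then have "max_prod_norm T (m + n)
      \<le> norm (mat_list_prod (take m As)) * norm (mat_list_prod (drop m As))"
    using As(3) norm_matrix_mult_le by metis
  also have "\<dots> \<le> max_prod_norm T m * max_prod_norm T n"
    using As(1,2) norm_mat_list_prod_le_max_prod_norm[of "take m As"]
      norm_mat_list_prod_le_max_prod_norm[of "drop m As"]
    by (intro mult_mono) (auto simp: max_prod_norm_nonneg dest: in_set_takeD in_set_dropD)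
  finally show ?thesis .
qed

lemma jsr_eq_INF: "jsr T = (INF l\<in>{1..}. max_prod_norm T l powr (1 / real l))"
proof -
  have "Max {norm (mat_list_prod As) powr (1 / real l) | As. set As \<subseteq> T \<and> length As = l}
      = max_prod_norm T l powr (1 / real l)" for l
  proof -
    let ?norms = "(\<lambda>As. norm (mat_list_prod As)) ` {As. set As \<subseteq> T \<and> length As = l}"
    have "{norm (mat_list_prod As) powr (1 / real l) | As. set As \<subseteq> T \<and> length As = l}
        = (\<lambda>x. x powr (1 / real l)) ` ?norms"
      by blast
    moreover have "mono_on {0..} (\<lambda>x::real. x powr (1 / real l))"
      by (intro mono_onI powr_mono2) auto
    ultimately show ?thesis
      unfolding max_prod_norm_def using products_of_length_finite_nonempty[of l]
      by (simp add: mono_on_Max_commute image_subset_iff)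
  qed
  then have "jsr T = lim (\<lambda>l. max_prod_norm T l powr (1 / real l))"
    unfolding jsr_def by presburger
  also have "\<dots> = (INF l\<in>{1..}. max_prod_norm T l powr (1 / real l))"
    by (intro limI submult_root_tendsto_INF max_prod_norm_submult max_prod_norm_nonneg)
  finally show ?thesis .
qed

lemma jsr_le_iff_bigo:
  "0 \<le> \<rho> \<Longrightarrow> jsr T \<le> \<rho> \<longleftrightarrow> (\<forall>d>\<rho>. max_prod_norm T \<in> O(\<lambda>l. d ^ l))"
  unfolding jsr_eq_INF
  by (intro submult_INF_root_le_iff_bigo max_prod_norm_submult max_prod_norm_nonneg)

end

lemma norm_digit_mat_seq_le:
  assumes "k \<ge> 2" "Fs 0 = 0"
  shows "norm (digit_mat_seq k Fs n) \<le> max_prod_norm (Fs ` {1..<k}) (length (digits k n))"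
proof (cases "0 \<in> set (digits k n)")
  case True
  then have "0 \<in> set (map Fs (digits k n))" using assms(2) by (metis image_eqI list.set_map)
  then have "digit_mat_seq k Fs n = 0"
    unfolding digit_mat_seq_def by (rule mat_list_prod_eq_0)
  then show ?thesis using assms(1) by (simp add: max_prod_norm_nonneg)
next
  case False
  then have "set (digits k n) \<subseteq> {1..<k}"
    using digits_less[OF assms(1)] by (auto simp: Suc_le_eq) (metis gr0I)
  then have "set (map Fs (digits k n)) \<subseteq> Fs ` {1..<k}" by auto
  from norm_mat_list_prod_le_max_prod_norm[OF _ _ this] show ?thesis
    unfolding digit_mat_seq_def using assms(1) by simp
qed

lemma max_prod_norm_eq_norm_digit_mat_seq:
  assumes "k \<ge> 2"
  shows "\<exists>n. length (digits k n) = l \<and> max_prod_norm (Fs ` {1..<k}) l = norm (digit_mat_seq k Fs n)"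
proof -
  have "finite (Fs ` {1..<k})" "Fs ` {1..<k} \<noteq> {}" using assms by auto
  from max_prod_norm_attained[OF this] obtain As where As: "set As \<subseteq> Fs ` {1..<k}"
    "length As = l" "max_prod_norm (Fs ` {1..<k}) l = norm (mat_list_prod As)"
    by blast
  from As(1) have "As \<in> map Fs ` lists {1..<k}"
    by (simp add: lists_image[symmetric] in_lists_conv_set subset_iff)
  then obtain ds where ds: "set ds \<subseteq> {1..<k}" "As = map Fs ds"
    by (auto simp: in_lists_conv_set)
  have "ds \<noteq> [] \<Longrightarrow> last ds \<in> {1..<k}"
    using ds(1) last_in_set by blast
  then have "ds \<noteq> [] \<Longrightarrow> last ds \<noteq> 0" by auto
  with ds(1) have "digits k (from_digits k ds) = ds"
    by (intro digits_from_digits assms) auto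
  then show ?thesis using As ds by (intro exI[of _ "from_digits k ds"]) (simp add: digit_mat_seq_def)
qed

lemma pow_length_digits_bigtheta:
  fixes d :: real
  assumes "k \<ge> 2" "d > 0"
  shows "(\<lambda>n. d ^ length (digits k n)) \<in> \<Theta>(\<lambda>n. real n powr log k d)"
proof -
  define M where "M = max d (inverse d)"
  have bounds: "d ^ length (digits k n) \<le> M * real n powr log k d"
    "real n powr log k d \<le> M * d ^ length (digits k n)" if "n > 0" for n
  proof -
    define s where "s = length (digits k n)"
    define t where "t = log k n"
    have "real s - 1 \<le> t" "t < real s"
      using log_floorlog_bounds[of n k] that assms(1) by (simp_all add: s_def t_def length_digits)
    then have M: "d powr (t - s) \<le> M" "d powr (s - t) \<le> M"
      unfolding M_def using assms(2) by (simp_all add: powr_le_max_inverse)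
    have pow_s: "d ^ s = d powr s" using assms(2) by (simp add: powr_realpow)
    have "real n powr log k d = d powr t"
      unfolding t_def using that assms(2) by (simp add: powr_log_swap)
    also have "\<dots> = d powr (t - s) * d ^ s" by (simp add: pow_s powr_add[symmetric])
    also have "\<dots> \<le> M * d ^ s" using M(1) assms(2) by (intro mult_right_mono) auto
    finally show "real n powr log k d \<le> M * d ^ s" .
    have "d ^ s = d powr (s - t) * d powr t" by (simp add: pow_s powr_add[symmetric])
    also have "\<dots> \<le> M * d powr t" using M(2) by (intro mult_right_mono) auto
    also have "d powr t = real n powr log k d"
      unfolding t_def using that assms(2) by (simp add: powr_log_swap)
    finally show "d ^ s \<le> M * real n powr log k d" .
  qed
  have "\<forall>\<^sub>F n in sequentially. norm (d ^ length (digits k n)) \<le> M * norm (real n powr log k d)"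
    "\<forall>\<^sub>F n in sequentially. norm (real n powr log k d) \<le> M * norm (d ^ length (digits k n))"
    using eventually_gt_at_top[of 0] by (eventually_elim, use bounds assms(2) in simp)+
  then show ?thesis by (simp add: bigomega_iff_bigo bigthetaI bigoI)
qed

lemma digit_mat_seq_bigo_iff:
  fixes d :: real
  assumes "k \<ge> 2" "Fs 0 = 0" "d > 0"
  shows "(\<lambda>n. norm (digit_mat_seq k Fs n)) \<in> O(\<lambda>n. real n powr log k d) \<longleftrightarrow>
    max_prod_norm (Fs ` {1..<k}) \<in> O(\<lambda>l. d ^ l)"
    (is "?F \<in> _ \<longleftrightarrow> ?M \<in> _")
proof
  assume F: "?F \<in> O(\<lambda>n. real n powr log k d)"
  obtain \<nu> where \<nu>: "\<And>l. length (digits k (\<nu> l)) = l"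
    "\<And>l. ?M l = norm (digit_mat_seq k Fs (\<nu> l))"
    using max_prod_norm_eq_norm_digit_mat_seq[OF assms(1)] by metis
  have "l \<le> \<nu> l" for l
    using floorlog_le_self[OF assms(1), of "\<nu> l"] \<nu>(1)[of l] assms(1) by (simp add: length_digits)
  then have \<nu>_lim: "filterlim \<nu> at_top at_top"
    by (intro filterlim_at_top_mono[OF filterlim_ident]) auto
  have "?M = (\<lambda>l. ?F (\<nu> l))" using \<nu>(2) by auto
  also have "(\<lambda>l. ?F (\<nu> l)) \<in> O(\<lambda>l. real (\<nu> l) powr log k d)"
    using F \<nu>_lim by (rule landau_o.big.compose)
  also have "(\<lambda>l. d ^ length (digits k (\<nu> l))) \<in> \<Theta>(\<lambda>l. real (\<nu> l) powr log k d)"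
    using pow_length_digits_bigtheta[OF assms(1,3)] \<nu>_lim by (rule landau_theta.compose)
  then have "(\<lambda>l. real (\<nu> l) powr log k d) \<in> O(\<lambda>l. d ^ length (digits k (\<nu> l)))"
    by (simp add: bigtheta_sym bigthetaD1)
  finally show "?M \<in> O(\<lambda>l. d ^ l)" by (simp add: \<nu>(1))
next
  assume M: "?M \<in> O(\<lambda>l. d ^ l)"
  have len_lim: "filterlim (\<lambda>n. length (digits k n)) at_top at_top"
    using filterlim_floorlog_at_top[OF assms(1)] assms(1) by (simp add: length_digits)
  have "norm (?F n) \<le> 1 * norm (?M (length (digits k n)))" for n
    using norm_digit_mat_seq_le[of k Fs n, OF assms(1,2)] abs_ge_self[of "?M (length (digits k n))"]
    by simp
  then have "?F \<in> O(\<lambda>n. ?M (length (digits k n)))"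
    by (intro bigoI always_eventually allI)
  also have "(\<lambda>n. ?M (length (digits k n))) \<in> O(\<lambda>n. d ^ length (digits k n))"
    using M len_lim by (rule landau_o.big.compose)
  also have "(\<lambda>n. d ^ length (digits k n)) \<in> O(\<lambda>n. real n powr log k d)"
    using pow_length_digits_bigtheta[OF assms(1,3)] by blast
  finally show "?F \<in> O(\<lambda>n. real n powr log k d)" .
qed

theorem corollary3p12:
  fixes k :: nat and S :: "real set" and Fs :: "nat \<Rightarrow> real^'n^'n" and \<rho>' :: real
  assumes "k \<ge> 2"
    and "real_subring S" and "\<forall>x\<in>S. algebraic x"
    and "\<forall>i<k. \<forall>a b. Fs i $ a $ b \<in> S"
    and "Fs 0 = 0"
    and "\<rho>' > 0"
  shows "jsr (Fs ` {1..<k}) \<le> \<rho>' \<longleftrightarrow>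
    (\<forall>\<epsilon>>0. (\<lambda>n. norm (digit_mat_seq k Fs n)) \<in> O(\<lambda>n. real n powr (log k \<rho>' + \<epsilon>)))"
proof -
  have "jsr (Fs ` {1..<k}) \<le> \<rho>' \<longleftrightarrow> (\<forall>d>\<rho>'. max_prod_norm (Fs ` {1..<k}) \<in> O(\<lambda>l. d ^ l))"
    using assms(1,6) by (intro jsr_le_iff_bigo) auto
  also have "\<dots> \<longleftrightarrow> (\<forall>d>\<rho>'. (\<lambda>n. norm (digit_mat_seq k Fs n)) \<in> O(\<lambda>n. real n powr log k d))"
    using digit_mat_seq_bigo_iff[of k Fs, OF assms(1,5)] assms(6) by auto
  also have "\<dots> \<longleftrightarrow>
    (\<forall>\<epsilon>>0. (\<lambda>n. norm (digit_mat_seq k Fs n)) \<in> O(\<lambda>n. real n powr (log k \<rho>' + \<epsilon>)))"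
    using assms(1,6) by (intro all_gt_log_iff) auto
  finally show ?thesis .
qed

end
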